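(* Let $X$ be a complex manifold of complex dimension $3$ with a nowhere vanishing holomorphic $(3,0)$-form $\Omega$ and a Hermitian metric $\omega$. At a point $x\in X$, let $\xi$ be a covector (with $(1,0)$-part also denoted $\xi$ and $(0,1)$-part $\bar\xi$) and let $\delta\Psi$ be a Hermitian $(2,2)$-form at $x$ lying in the kernel of the principal symbol of the exterior derivative $d$ on $(2,2)$-forms at $\xi$ (i.e. $\xi\wedge\delta\Psi=0$ and $\bar\xi\wedge\delta\Psi=0$). Then $$i\,\xi\wedge\bar\xi\wedge\tilde\star\,\delta\Psi=\frac{1}{2\|\Omega\|_\omega}|\xi|^2\,\delta\Psi,$$ where $|\xi|$ is the norm of $\xi$ with respect to $\omega$.
   Context: Write $\omega=i\omega_{\bar kj}dz^j\wedge d\bar z^k$; locally $\Omega=\Omega(z)dz^1\wedge dz^2\wedge dz^3$ and $\|\Omega\|_\omega=(|\Omega(z)|^2/\det\omega_{\bar kj})^{1/2}$. The Hodge star $\star=\star_\omega$ sends $(2,2)$-forms to $(1,1)$-forms via $\phi\wedge\overline{\Psi}=\frac{\langle\phi,\star\Psi\rangle_\omega}{3!}\omega^3$ for all $(1,1)$-forms $\phi$, with $\langle\cdot,\cdot\rangle_\omega$ the inner product induced by $\omega$. The operator $\tilde\star$ from $(2,2)$-forms to $(1,1)$-forms is $\tilde\star\,\delta\Psi=\frac{1}{2\|\Omega\|_\omega}\big(\langle\star\delta\Psi,\omega\rangle\omega-\star\delta\Psi\big)$. *)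

theory Defs
  imports "HOL-Analysis.Analysis"
begin

text \<open>Pointwise linear algebra at a point x of a complex 3-fold, in holomorphic
coordinates z^1,z^2,z^3 at x.  Complex-valued exterior forms at x are
functions from finite sets of generator indices to their coefficients:
generator j (j<3) is dz^(j+1), generator j+3 (j<3) is the conjugate of dz^(j+1);
alpha S is the coefficient of the increasing wedge of the generators in S.\<close>

type_synonym cform = "nat set \<Rightarrow> complex"

definition smult :: "complex \<Rightarrow> cform \<Rightarrow> cform" where
  "smult c \<alpha> = (\<lambda>S. c * \<alpha> S)"

definition shuffle_sign :: "nat set \<Rightarrow> nat set \<Rightarrow> complex" where
  "shuffle_sign A B = (-1) ^ card {(a, b). a \<in> A \<and> b \<in> B \<and> b < a}"

definition wedge :: "cform \<Rightarrow> cform \<Rightarrow> cform" where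
  "wedge \<alpha> \<beta> = (\<lambda>S. \<Sum>A\<in>Pow S. shuffle_sign A (S - A) * \<alpha> A * \<beta> (S - A))"

text \<open>complex conjugation on generators: dz^j <-> conj dz^j\<close>
definition csig :: "nat \<Rightarrow> nat" where
  "csig a = (if a < 3 then a + 3 else a - 3)"

definition conjf :: "cform \<Rightarrow> cform" where
  "conjf \<alpha> = (\<lambda>T. if T \<subseteq> {0..<6} then
      (let S = csig ` T in
        (-1) ^ card {(p, q). p \<in> S \<and> q \<in> S \<and> p < q \<and> csig q < csig p} * cnj (\<alpha> S))
      else 0)"

definition has_bidegree :: "nat \<Rightarrow> nat \<Rightarrow> cform \<Rightarrow> bool" where
  "has_bidegree p q \<alpha> \<longleftrightarrow> (\<forall>S. \<alpha> S \<noteq> 0 \<longrightarrow>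
      S \<subseteq> {0..<6} \<and> card (S \<inter> {0..<3}) = p \<and> card (S \<inter> {3..<6}) = q)"

definition real_form :: "cform \<Rightarrow> bool" where
  "real_form \<alpha> \<longleftrightarrow> conjf \<alpha> = \<alpha>"

definition idx :: "nat \<Rightarrow> 3" where
  "idx j = of_nat j"

text \<open>W \$ idx k \$ idx j is the coefficient omega_{bar k j}:
  omega = i * sum omega_{bar k j} dz^j wedge conj(dz^k).
  Hermitian metric: Hermitian, positive definite matrix.\<close>
definition hermitian_metric :: "complex^3^3 \<Rightarrow> bool" where
  "hermitian_metric W \<longleftrightarrow> (\<forall>a b. W $ a $ b = cnj (W $ b $ a)) \<and>
     (\<forall>v::complex^3. v \<noteq> 0 \<longrightarrow> 0 < Re (\<Sum>a\<in>UNIV. \<Sum>b\<in>UNIV. W $ a $ b * v $ b * cnj (v $ a)))"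

definition omega :: "complex^3^3 \<Rightarrow> cform" where
  "omega W = (\<lambda>S. \<Sum>j<3. \<Sum>k<3. if S = {j, k + 3} then \<i> * W $ idx k $ idx j else 0)"

definition ginv :: "complex^3^3 \<Rightarrow> nat \<Rightarrow> nat \<Rightarrow> complex" where
  "ginv W j l = matrix_inv W $ idx j $ idx l"

definition coef11 :: "cform \<Rightarrow> nat \<Rightarrow> nat \<Rightarrow> complex" where
  "coef11 \<phi> j k = \<phi> {j, k + 3}"

definition inner11 :: "complex^3^3 \<Rightarrow> cform \<Rightarrow> cform \<Rightarrow> complex" where
  "inner11 W \<phi> \<psi> = (\<Sum>j<3. \<Sum>k<3. \<Sum>l<3. \<Sum>m<3.
      ginv W j l * ginv W m k * coef11 \<phi> j k * cnj (coef11 \<psi> l m))"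

definition omega3 :: "complex^3^3 \<Rightarrow> cform" where
  "omega3 W = wedge (omega W) (wedge (omega W) (omega W))"

definition hodge :: "complex^3^3 \<Rightarrow> cform \<Rightarrow> cform" where
  "hodge W \<Psi> = (THE ch. has_bidegree 1 1 ch \<and>
      (\<forall>\<phi>. has_bidegree 1 1 \<phi> \<longrightarrow>
         wedge \<phi> (conjf \<Psi>) = smult (inner11 W \<phi> ch / 6) (omega3 W)))"

text \<open>norm of Omega = Omega(z) dz^1 dz^2 dz^3 at x\<close>
definition Omega_norm :: "complex^3^3 \<Rightarrow> complex \<Rightarrow> real" where
  "Omega_norm W \<Omega> = sqrt ((cmod \<Omega>)\<^sup>2 / Re (det W))"

definition tstar :: "complex^3^3 \<Rightarrow> complex \<Rightarrow> cform \<Rightarrow> cform" where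
  "tstar W \<Omega> \<Psi> = smult (1 / (2 * complex_of_real (Omega_norm W \<Omega>)))
      (\<lambda>S. inner11 W (hodge W \<Psi>) (omega W) * omega W S - hodge W \<Psi> S)"

definition covec_norm2 :: "complex^3^3 \<Rightarrow> cform \<Rightarrow> real" where
  "covec_norm2 W \<xi> = Re (\<Sum>j<3. \<Sum>l<3. ginv W j l * \<xi> {j} * cnj (\<xi> {l}))"

end

theory Submission
  imports Defs
begin

text \<open>A real (2,2)-form \<open>\<Psi>\<close> is encoded by
  the Hermitian 3\<times>3 matrix \<open>L\<close> of its coefficients; its Hodge star is the (1,1)-form with
  coefficient matrix \<open>i (W L W)\<^sup>T / det W\<close>, so that \<open>tstar W \<Omega> \<Psi>\<close> has coefficient matrix
  \<open>i (tr (L W) W - W L W)\<^sup>T / (2 \<parallel>\<Omega>\<parallel> det W)\<close>. Wedging with the rank-one (1,1)-form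
  \<open>\<xi> \<and> conj \<xi>\<close> produces polarised 2\<times>2 minors, so after multiplication by \<open>det W\<close> every
  coefficient of the difference of the two sides is a polynomial in \<open>W\<close>, \<open>\<xi>\<close>, \<open>conj \<xi>\<close> and \<open>L\<close>
  (the term \<open>det W |\<xi>|\<^sup>2\<close> is a quadratic form in the adjugate of \<open>W\<close>). That polynomial is an
  explicit linear combination of the coefficients of \<open>\<xi> \<and> \<Psi>\<close> and \<open>conj \<xi> \<and> \<Psi>\<close>, which vanish.\<close>

section \<open>Wedge products and bidegrees\<close>

lemma card_pairs:
  assumes "finite A" "finite B"
  shows "card {(a, b). a \<in> A \<and> b \<in> B \<and> R a b} = (\<Sum>a\<in>A. \<Sum>b\<in>B. if R a b then 1 else 0)"
proof -
  have e: "{(a, b). a \<in> A \<and> b \<in> B \<and> R a b} = Sigma A (\<lambda>a. {b\<in>B. R a b})" by auto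
  have "card (Sigma A (\<lambda>a. {b\<in>B. R a b})) = (\<Sum>a\<in>A. card {b\<in>B. R a b})"
    using assms by (simp add: card_SigmaI)
  also have "\<dots> = (\<Sum>a\<in>A. \<Sum>b\<in>B. if R a b then 1 else 0)"
    using assms by (intro sum.cong refl, subst sum.inter_filter[symmetric]) auto
  finally show ?thesis using e by simp
qed

lemma shuffle_sign_eval:
  "finite A \<Longrightarrow> finite B \<Longrightarrow> shuffle_sign A B = (-1) ^ (\<Sum>a\<in>A. \<Sum>b\<in>B. if b < a then 1 else 0)"
  unfolding shuffle_sign_def by (simp add: card_pairs)

lemma wedge_nonzero_split:
  assumes "wedge \<alpha> \<beta> S \<noteq> 0"
  shows "\<exists>A\<subseteq>S. \<alpha> A \<noteq> 0 \<and> \<beta> (S - A) \<noteq> 0"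
proof (rule ccontr)
  assume "\<not> ?thesis"
  then have "\<forall>A\<in>Pow S. shuffle_sign A (S - A) * \<alpha> A * \<beta> (S - A) = 0" by auto
  then have "wedge \<alpha> \<beta> S = 0" unfolding wedge_def by (simp add: sum.neutral)
  with assms show False by simp
qed

definition bideg_set :: "nat \<Rightarrow> nat \<Rightarrow> nat set \<Rightarrow> bool" where
  "bideg_set p q S \<longleftrightarrow> S \<subseteq> {0..<6} \<and> card (S \<inter> {0..<3}) = p \<and> card (S \<inter> {3..<6}) = q"

lemma has_bidegree_iff: "has_bidegree p q \<alpha> \<longleftrightarrow> (\<forall>S. \<alpha> S \<noteq> 0 \<longrightarrow> bideg_set p q S)"
  unfolding has_bidegree_def bideg_set_def by simp

lemma has_bidegree_wedge:
  assumes "has_bidegree p q \<alpha>" "has_bidegree p' q' \<beta>"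
  shows "has_bidegree (p + p') (q + q') (wedge \<alpha> \<beta>)"
  unfolding has_bidegree_iff
proof (intro allI impI)
  fix S assume "wedge \<alpha> \<beta> S \<noteq> 0"
  then obtain A where A: "A \<subseteq> S" "\<alpha> A \<noteq> 0" "\<beta> (S - A) \<noteq> 0" using wedge_nonzero_split by blast
  have a: "bideg_set p q A" and b: "bideg_set p' q' (S - A)"
    using A assms unfolding has_bidegree_iff by auto
  have S: "S = A \<union> (S - A)" using A by auto
  have fA: "finite A" and fB: "finite (S - A)" using a b unfolding bideg_set_def
    by (auto intro: finite_subset)
  have c: "card ((A \<union> (S - A)) \<inter> X) = card (A \<inter> X) + card ((S - A) \<inter> X)" for X
  proof -
    have "(A \<union> (S - A)) \<inter> X = (A \<inter> X) \<union> ((S - A) \<inter> X)" by auto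
    moreover have "(A \<inter> X) \<inter> ((S - A) \<inter> X) = {}" by auto
    ultimately show ?thesis using fA fB by (simp add: card_Un_disjoint)
  qed
  show "bideg_set (p + p') (q + q') S"
  proof -
    have "S \<subseteq> {0..<6}" using a b S unfolding bideg_set_def by blast
    moreover have "card (S \<inter> {0..<3}) = p + p'" using a b c[of "{0..<3}"] S unfolding bideg_set_def by simp
    moreover have "card (S \<inter> {3..<6}) = q + q'" using a b c[of "{3..<6}"] S unfolding bideg_set_def by simp
    ultimately show ?thesis unfolding bideg_set_def by simp
  qed
qed

lemma has_bidegree_smult: "has_bidegree p q \<alpha> \<Longrightarrow> has_bidegree p q (smult c \<alpha>)"
  by (simp add: has_bidegree_def smult_def)

lemma wedge_smult_right: "wedge \<alpha> (smult c \<beta>) = smult c (wedge \<alpha> \<beta>)"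
  by (simp add: wedge_def smult_def sum_distrib_left mult_ac fun_eq_iff)

lemma wedge_eq_sum_support:
  assumes "finite F" "\<And>A. \<alpha> A \<noteq> 0 \<Longrightarrow> A \<in> F" "finite S"
  shows "wedge \<alpha> \<beta> S = (\<Sum>A\<in>F. if A \<subseteq> S then shuffle_sign A (S - A) * \<alpha> A * \<beta> (S - A) else 0)"
proof -
  let ?f = "\<lambda>A. shuffle_sign A (S - A) * \<alpha> A * \<beta> (S - A)"
  have "wedge \<alpha> \<beta> S = (\<Sum>A\<in>Pow S. ?f A)" unfolding wedge_def ..
  also have "\<dots> = (\<Sum>A\<in>Pow S \<inter> F. ?f A)"
    by (rule sum.mono_neutral_right) (use assms in auto)
  also have "\<dots> = (\<Sum>A\<in>F. if A \<in> Pow S then ?f A else 0)"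
    using assms by (simp add: sum.inter_restrict Int_commute)
  finally show ?thesis by simp
qed

definition nat3 :: "3 \<Rightarrow> nat" where "nat3 a = (if a = 1 then 1 else if a = 2 then 2 else 0)"

lemma nat3_simps [simp]: "nat3 0 = 0" "nat3 1 = 1" "nat3 2 = 2" "nat3 3 = 0"
  by (simp_all add: nat3_def)

lemma nat3_less [simp]: "nat3 a < 3"
  by (simp add: nat3_def)

lemma nat3_eq_iff [simp]: "nat3 a = nat3 b \<longleftrightarrow> a = b"
  using exhaust_3[of a] exhaust_3[of b] by auto

lemma nat3_surj: "x < 3 \<Longrightarrow> \<exists>a. nat3 a = x"
proof -
  assume "x < 3"
  then have "x = 0 \<or> x = 1 \<or> x = 2" by auto
  then show ?thesis by (metis nat3_simps(1,2,3))
qed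

lemma inj_nat3: "inj nat3" by (simp add: inj_def)

definition idx11 :: "3 \<Rightarrow> 3 \<Rightarrow> nat set" where "idx11 a b = {nat3 a, nat3 b + 3}"

definition idx22 :: "3 \<Rightarrow> 3 \<Rightarrow> nat set" where "idx22 a b = {0..<6} - idx11 a b"

text \<open>For \<open>a \<noteq> c\<close>, \<open>third a c\<close> is the element of \<open>3\<close> different from both.\<close>

definition third :: "3 \<Rightarrow> 3 \<Rightarrow> 3" where
  "third a c = (if a \<noteq> 0 \<and> c \<noteq> 0 then 0 else if a \<noteq> 1 \<and> c \<noteq> 1 then 1 else 2)"

lemma atLeastLessThan_6_eq: "{0..<6::nat} = {0,1,2,3,4,5}" by auto

lemma idx11_eq_iff: "idx11 a b = idx11 c e \<longleftrightarrow> a = c \<and> b = e"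
proof
  assume h: "idx11 a b = idx11 c e"
  have m1: "nat3 a \<in> {nat3 c, nat3 e + 3}" using h unfolding idx11_def by blast
  have "nat3 a \<noteq> nat3 e + 3" using nat3_less[of a] by linarith
  with m1 have "nat3 a = nat3 c" by blast
  moreover have m2: "nat3 b + 3 \<in> {nat3 c, nat3 e + 3}" using h unfolding idx11_def by blast
  have "nat3 b + 3 \<noteq> nat3 c" using nat3_less[of c] by linarith
  with m2 have "nat3 b = nat3 e" by simp
  ultimately show "a = c \<and> b = e" by simp
qed simp


lemma finite_idx11 [simp]: "finite (idx11 a b)" by (simp add: idx11_def)
lemma finite_idx22 [simp]: "finite (idx22 a b)" by (simp add: idx22_def)

lemma idx11_subset_top: "idx11 c e \<subseteq> {0..<6}"
  unfolding idx11_def using nat3_less[of c] nat3_less[of e] by (auto simp del: nat3_less)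

lemma idx11_subset_idx22_iff: "idx11 c e \<subseteq> idx22 a b \<longleftrightarrow> c \<noteq> a \<and> e \<noteq> b"
  unfolding idx22_def idx11_def using nat3_less[of c] nat3_less[of e] nat3_less[of a] nat3_less[of b]
  by (auto simp del: nat3_less)

lemma idx22_diff_idx11:
  assumes "c \<noteq> a" "e \<noteq> b"
  shows "idx22 a b - idx11 c e = idx11 (third a c) (third b e)"
proof -
  have "\<forall>a b c e. c \<noteq> a \<longrightarrow> e \<noteq> b \<longrightarrow> idx22 a b - idx11 c e = idx11 (third a c) (third b e)"
    unfolding forall_3 idx22_def idx11_def third_def atLeastLessThan_6_eq
    by (simp add: set_eq_subset insert_Diff_if)
  then show ?thesis by (simp add: assms)
qed

lemma bideg_set_dzbar: "bideg_set 0 1 {nat3 e + 3}"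
proof -
  have "{nat3 e + 3} \<inter> {0..<3} = {}" "{nat3 e + 3} \<inter> {3..<6} = {nat3 e + 3}" using nat3_less[of e] by (auto simp del: nat3_less)
  then show ?thesis unfolding bideg_set_def using nat3_less[of e] by simp
qed

lemma bideg_set_idx11: "bideg_set 1 1 (idx11 a b)"
proof -
  have "idx11 a b \<inter> {0..<3} = {nat3 a}" "idx11 a b \<inter> {3..<6} = {nat3 b + 3}"
    unfolding idx11_def using nat3_less[of a] nat3_less[of b] by (auto simp del: nat3_less)
  then show ?thesis unfolding bideg_set_def using idx11_subset_top by simp
qed

lemma bideg_set_10_cases: assumes "bideg_set 1 0 S" shows "\<exists>a. S = {nat3 a}"
proof -
  from assms have S: "S \<subseteq> {0..<6}" and c1: "card (S \<inter> {0..<3}) = 1" and c2: "card (S \<inter> {3..<6}) = 0"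
    unfolding bideg_set_def by auto
  obtain x where x: "S \<inter> {0..<3} = {x}" using c1 by (auto simp: card_1_singleton_iff)
  have "S \<inter> {3..<6} = {}" using c2 by simp
  have "x < 3" using x by auto
  then obtain a where a: "nat3 a = x" using nat3_surj by blast
  have "S = (S \<inter> {0..<3}) \<union> (S \<inter> {3..<6})" using S by auto
  also have "\<dots> = {nat3 a}" using x a \<open>S \<inter> {3..<6} = {}\<close> by simp
  finally show ?thesis by blast
qed

lemma bideg_set_11_cases: assumes "bideg_set 1 1 S" shows "\<exists>a b. S = idx11 a b"
proof -
  from assms have S: "S \<subseteq> {0..<6}" and c1: "card (S \<inter> {0..<3}) = 1" and c2: "card (S \<inter> {3..<6}) = 1"
    unfolding bideg_set_def by auto
  have "\<exists>x. S \<inter> {0..<3} = {x}" using c1 by (simp add: card_1_singleton_iff)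
  then obtain x where x: "S \<inter> {0..<3} = {x}" by blast
  have "\<exists>y. S \<inter> {3..<6} = {y}" using c2 by (simp add: card_1_singleton_iff)
  then obtain y where y: "S \<inter> {3..<6} = {y}" by blast
  have "x < 3" using x by auto
  then obtain a where a: "nat3 a = x" using nat3_surj by blast
  have "3 \<le> y" "y < 6" using y by auto
  then have "y - 3 < 3" by simp
  then obtain b where b: "nat3 b = y - 3" using nat3_surj by blast
  have "S = (S \<inter> {0..<3}) \<union> (S \<inter> {3..<6})" using S by auto
  also have "\<dots> = idx11 a b" unfolding x y idx11_def using a b \<open>3 \<le> y\<close> by auto
  finally show ?thesis by blast
qed

lemma bideg_set_22_cases: assumes "bideg_set 2 2 S" shows "\<exists>a b. S = idx22 a b"
proof -
  from assms have S: "S \<subseteq> {0..<6}" and c1: "card (S \<inter> {0..<3}) = 2" and c2: "card (S \<inter> {3..<6}) = 2"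
    unfolding bideg_set_def by auto
  have "{0..<3} - S = {0..<3} - (S \<inter> {0..<3})" by auto
  then have "card ({0..<3} - S) = 1" using c1 by (simp add: card_Diff_subset)
  then obtain x where x: "{0..<3} - S = {x}" by (auto simp: card_1_singleton_iff)
  have "{3..<6} - S = {3..<6} - (S \<inter> {3..<6})" by auto
  then have "card ({3..<6} - S) = 1" using c2 by (simp add: card_Diff_subset)
  then obtain y where y: "{3..<6} - S = {y}" by (auto simp: card_1_singleton_iff)
  have "x < 3" using x by auto
  then obtain a where a: "nat3 a = x" using nat3_surj by blast
  have "3 \<le> y" "y < 6" using y by auto
  then have "y - 3 < 3" by simp
  then obtain b where b: "nat3 b = y - 3" using nat3_surj by blast
  have "S = {0..<6} - (({0..<3} - S) \<union> ({3..<6} - S))" using S by auto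
  also have "\<dots> = idx22 a b" unfolding x y idx22_def idx11_def using a b \<open>3 \<le> y\<close> by auto
  finally show ?thesis by blast
qed

lemma bideg_set_33_eq: assumes "bideg_set 3 3 S" shows "S = {0..<6}"
proof -
  from assms have S: "S \<subseteq> {0..<6}" and c1: "card (S \<inter> {0..<3}) = 3" and c2: "card (S \<inter> {3..<6}) = 3"
    unfolding bideg_set_def by auto
  have a1: "S \<inter> {0..<3} = {0..<3}" using c1 by (intro card_subset_eq) auto
  have a2: "S \<inter> {3..<6} = {3..<6}" using c2 by (intro card_subset_eq) auto
  have "{0..<6} \<subseteq> S"
  proof
    fix z :: nat assume z: "z \<in> {0..<6}"
    show "z \<in> S"
    proof (cases "z < 3")
      case True then have "z \<in> S \<inter> {0..<3}" using a1 by simp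
      then show ?thesis by simp
    next
      case False then have "z \<in> S \<inter> {3..<6}" using a2 z by simp
      then show ?thesis by simp
    qed
  qed
  then show ?thesis using S by blast
qed

lemma bideg10_support: "has_bidegree 1 0 \<xi> \<Longrightarrow> \<xi> A \<noteq> 0 \<Longrightarrow> \<exists>c. A = {nat3 c}"
  unfolding has_bidegree_iff using bideg_set_10_cases by blast

lemma bideg11_eqI:
  assumes "has_bidegree 1 1 \<alpha>" "has_bidegree 1 1 \<beta>" "\<And>c e. \<alpha> (idx11 c e) = \<beta> (idx11 c e)"
  shows "\<alpha> = \<beta>"
proof
  fix S show "\<alpha> S = \<beta> S"
  proof (cases "\<exists>c e. S = idx11 c e")
    case True then show ?thesis using assms(3) by blast
  next
    case False
    then have "\<not> bideg_set 1 1 S" using bideg_set_11_cases by blast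
    then show ?thesis using assms(1,2) unfolding has_bidegree_iff by metis
  qed
qed

lemma bideg22_eqI:
  assumes "has_bidegree 2 2 \<alpha>" "has_bidegree 2 2 \<beta>" "\<And>a b. \<alpha> (idx22 a b) = \<beta> (idx22 a b)"
  shows "\<alpha> = \<beta>"
proof
  fix S show "\<alpha> S = \<beta> S"
  proof (cases "\<exists>a b. S = idx22 a b")
    case True then show ?thesis using assms(3) by blast
  next
    case False
    then have "\<not> bideg_set 2 2 S" using bideg_set_22_cases by blast
    then show ?thesis using assms(1,2) unfolding has_bidegree_iff by metis
  qed
qed

lemma bideg33_outside_top: "has_bidegree 3 3 \<alpha> \<Longrightarrow> S \<noteq> {0..<6} \<Longrightarrow> \<alpha> S = 0"
  unfolding has_bidegree_iff using bideg_set_33_eq by blast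

lemma sum_lessThan_3: "(\<Sum>j<3. f j) = (\<Sum>a\<in>(UNIV::3 set). f (nat3 a))"
  by (simp add: numeral_3_eq_3 numeral_2_eq_2 sum_3 ac_simps)

lemma idx_nat3 [simp]: "idx (nat3 a) = a"
proof -
  have "a = 1 \<or> a = 2 \<or> a = 3" by (rule exhaust_3)
  then show ?thesis by (auto simp: idx_def)
qed

lemma type_3_numeral_simps [simp]: "(3::3) = 0" "(4::3) = 1" by simp_all

lemma type_3_add_simps:
  "(1 + 1 :: 3) = 2" "(2 + 1 :: 3) = 0" "(1 + 2 :: 3) = 0" "(2 + 2 :: 3) = 1" "(0 + 1 :: 3) = 1" "(0 + 2 :: 3) = 2"
  by simp_all

definition form11 :: "(3 \<Rightarrow> 3 \<Rightarrow> complex) \<Rightarrow> cform" where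
  "form11 f S = (\<Sum>a\<in>UNIV. \<Sum>b\<in>UNIV. if S = idx11 a b then f a b else 0)"

lemma form11_idx11 [simp]: "form11 f (idx11 c e) = f c e"
proof -
  have "form11 f (idx11 c e) = (\<Sum>a\<in>UNIV. \<Sum>b\<in>UNIV. if c = a then (if e = b then f a b else 0) else 0)"
    unfolding form11_def idx11_eq_iff by (intro sum.cong refl) auto
  also have "\<dots> = (\<Sum>a\<in>UNIV. if c = a then f a e else 0)"
    by (intro sum.cong refl) auto
  also have "\<dots> = f c e" by simp
  finally show ?thesis .
qed

lemma form11_eq_0: "(\<And>a b. S \<noteq> idx11 a b) \<Longrightarrow> form11 f S = 0"
  unfolding form11_def by simp

lemma has_bidegree_form11: "has_bidegree 1 1 (form11 f)"
  unfolding has_bidegree_iff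
proof (intro allI impI)
  fix S assume "form11 f S \<noteq> 0"
  then obtain a b where "S = idx11 a b" using form11_eq_0 by blast
  then show "bideg_set 1 1 S" using bideg_set_idx11 by simp
qed

lemma form11_diff: "(\<lambda>S. c * form11 f S - form11 g S) = form11 (\<lambda>a b. c * f a b - g a b)"
  by (auto simp: form11_def fun_eq_iff sum_distrib_left sum_subtractf[symmetric] intro!: sum.cong)

lemma wedge_bideg11_eq_sum:
  assumes "has_bidegree 1 1 \<alpha>" "finite S"
  shows "wedge \<alpha> \<beta> S = (\<Sum>c\<in>UNIV. \<Sum>e\<in>UNIV. if idx11 c e \<subseteq> S then
      shuffle_sign (idx11 c e) (S - idx11 c e) * \<alpha> (idx11 c e) * \<beta> (S - idx11 c e) else 0)"
proof -
  let ?g = "\<lambda>A. if A \<subseteq> S then shuffle_sign A (S - A) * \<alpha> A * \<beta> (S - A) else 0"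
  have supp: "A \<in> (\<lambda>p. idx11 (fst p) (snd p)) ` UNIV" if "\<alpha> A \<noteq> 0" for A
  proof -
    have "bideg_set 1 1 A" using assms(1) that unfolding has_bidegree_iff by blast
    then obtain c e where "A = idx11 c e" using bideg_set_11_cases by blast
    then show ?thesis by (intro image_eqI[of _ _ "(c,e)"]) auto
  qed
  have "wedge \<alpha> \<beta> S = sum ?g ((\<lambda>p. idx11 (fst p) (snd p)) ` UNIV)"
    by (rule wedge_eq_sum_support) (use supp assms(2) in auto)
  also have "\<dots> = (\<Sum>p\<in>UNIV. ?g (idx11 (fst p) (snd p)))"
    by (subst sum.reindex) (auto simp: inj_on_def idx11_eq_iff prod_eq_iff)
  also have "\<dots> = (\<Sum>c\<in>UNIV. \<Sum>e\<in>UNIV. ?g (idx11 c e))"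
    by (simp add: UNIV_Times_UNIV[symmetric] sum.cartesian_product case_prod_beta del: UNIV_Times_UNIV)
  finally show ?thesis .
qed

lemma wedge_singletons_eq_sum:
  fixes f :: "3 \<Rightarrow> nat"
  assumes "\<And>A. \<alpha> A \<noteq> 0 \<Longrightarrow> \<exists>c. A = {f c}" "inj f" "finite S"
  shows "wedge \<alpha> \<beta> S = (\<Sum>c\<in>UNIV. if {f c} \<subseteq> S then
      shuffle_sign {f c} (S - {f c}) * \<alpha> {f c} * \<beta> (S - {f c}) else 0)"
proof -
  let ?g = "\<lambda>A. if A \<subseteq> S then shuffle_sign A (S - A) * \<alpha> A * \<beta> (S - A) else 0"
  have "wedge \<alpha> \<beta> S = sum ?g ((\<lambda>c. {f c}) ` UNIV)"
    by (rule wedge_eq_sum_support) (use assms in auto)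
  also have "\<dots> = (\<Sum>c\<in>UNIV. ?g {f c})"
    by (subst sum.reindex) (use assms(2) in \<open>auto simp: inj_on_def inj_def\<close>)
  finally show ?thesis .
qed

lemma wedge_bideg11_idx22:
  assumes "has_bidegree 1 1 \<alpha>"
  shows "wedge \<alpha> \<beta> (idx22 a b) = (\<Sum>c\<in>UNIV. \<Sum>e\<in>UNIV. if c \<noteq> a \<and> e \<noteq> b then
      shuffle_sign (idx11 c e) (idx11 (third a c) (third b e)) * \<alpha> (idx11 c e) * \<beta> (idx11 (third a c) (third b e)) else 0)"
  unfolding wedge_bideg11_eq_sum[OF assms finite_idx22]
  by (intro sum.cong refl) (simp add: idx11_subset_idx22_iff idx22_diff_idx11)

lemma wedge_bideg11_top:
  assumes "has_bidegree 1 1 \<alpha>"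
  shows "wedge \<alpha> \<beta> {0..<6} = (\<Sum>c\<in>UNIV. \<Sum>e\<in>UNIV.
      shuffle_sign (idx11 c e) (idx22 c e) * \<alpha> (idx11 c e) * \<beta> (idx22 c e))"
  unfolding wedge_bideg11_eq_sum[OF assms finite_atLeastLessThan]
  by (intro sum.cong refl) (simp add: idx11_subset_top idx22_def)

lemma shuffle_sign_idx11: "shuffle_sign (idx11 c e) (idx11 c' e') =
   (-1) ^ ((if nat3 c' < nat3 c then 1 else 0) + 1 + (if nat3 e' < nat3 e then 1 else 0))"
proof -
  have d1: "nat3 c \<noteq> nat3 e + 3" "nat3 c' \<noteq> nat3 e' + 3" "\<not> nat3 e' + 3 < nat3 c" "nat3 c' < nat3 e + 3"
    using nat3_less[of c] nat3_less[of c'] by linarith+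
  show ?thesis using d1 by (simp add: shuffle_sign_eval idx11_def del: nat3_eq_iff)
qed

lemma shuffle_sign_idx11_idx22: "shuffle_sign (idx11 a b) (idx22 a b) = (-1) ^ (nat3 a + nat3 b)"
proof -
  have "a = 1 \<or> a = 2 \<or> a = 3" "b = 1 \<or> b = 2 \<or> b = 3" by (rule exhaust_3)+
  then show ?thesis
    by (elim disjE) (simp_all add: idx22_def idx11_def atLeastLessThan_6_eq insert_Diff_if shuffle_sign_eval)
qed

lemma shuffle_sign_dz_idx22: "shuffle_sign {nat3 a} (idx22 a b) = (-1) ^ (nat3 a)"
proof -
  have "a = 1 \<or> a = 2 \<or> a = 3" "b = 1 \<or> b = 2 \<or> b = 3" by (rule exhaust_3)+
  then show ?thesis
    by (elim disjE) (simp_all add: idx22_def idx11_def atLeastLessThan_6_eq insert_Diff_if shuffle_sign_eval)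
qed

lemma shuffle_sign_dzbar_idx22: "shuffle_sign {nat3 e + 3} (idx22 a e) = (-1) ^ (nat3 e)"
proof -
  have "a = 1 \<or> a = 2 \<or> a = 3" "e = 1 \<or> e = 2 \<or> e = 3" by (rule exhaust_3)+
  then show ?thesis
    by (elim disjE) (simp_all add: idx22_def idx11_def atLeastLessThan_6_eq insert_Diff_if shuffle_sign_eval)
qed

lemma csig_csig: "x < 6 \<Longrightarrow> csig (csig x) = x" by (auto simp: csig_def)

lemma pairs_same_empty: "{(p, q). p = (x::nat) \<and> q = x \<and> p < q \<and> R p q} = {}" by auto

lemma conjf_dzbar: "conjf \<alpha> {nat3 e + 3} = cnj (\<alpha> {nat3 e})"
proof -
  have s: "{nat3 e + 3} \<subseteq> {0..<6}" using nat3_less[of e] by simp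
  have i: "csig ` {nat3 e + 3} = {nat3 e}" by (simp add: csig_def)
  show ?thesis unfolding conjf_def using s i by (simp add: Let_def pairs_same_empty)
qed

lemma conjf_bideg10_support:
  assumes "has_bidegree 1 0 \<xi>" "conjf \<xi> T \<noteq> 0"
  shows "\<exists>e. T = {nat3 e + 3}"
proof -
  have T: "T \<subseteq> {0..<6}" and "\<xi> (csig ` T) \<noteq> 0"
    using assms(2) unfolding conjf_def Let_def by (auto split: if_splits)
  then have "bideg_set 1 0 (csig ` T)" using assms(1) unfolding has_bidegree_iff by blast
  then obtain a where a: "csig ` T = {nat3 a}" using bideg_set_10_cases by blast
  have "T = (\<lambda>x. csig (csig x)) ` T"
    using T csig_csig by (subst image_cong[of T T _ id]) auto
  also have "\<dots> = csig ` csig ` T" by (simp add: image_image)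
  also have "\<dots> = {nat3 a + 3}" using a nat3_less[of a] by (simp add: csig_def)
  finally show ?thesis by blast
qed

lemma has_bidegree_conjf_10: "has_bidegree 1 0 \<xi> \<Longrightarrow> has_bidegree 0 1 (conjf \<xi>)"
  unfolding has_bidegree_iff[of 0 1] using conjf_bideg10_support bideg_set_dzbar by metis

lemma has_bidegree_wedge_conjf: "has_bidegree 1 0 \<xi> \<Longrightarrow> has_bidegree 1 1 (wedge \<xi> (conjf \<xi>))"
  using has_bidegree_wedge[of 1 0 \<xi> 0 1 "conjf \<xi>"] has_bidegree_conjf_10 by simp

lemma wedge_conjf_idx11:
  assumes "has_bidegree 1 0 \<xi>"
  shows "wedge \<xi> (conjf \<xi>) (idx11 c e) = \<xi> {nat3 c} * cnj (\<xi> {nat3 e})"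
proof -
  have "wedge \<xi> (conjf \<xi>) (idx11 c e) = (\<Sum>a\<in>UNIV. if {nat3 a} \<subseteq> idx11 c e then
      shuffle_sign {nat3 a} (idx11 c e - {nat3 a}) * \<xi> {nat3 a} * conjf \<xi> (idx11 c e - {nat3 a}) else 0)"
    by (rule wedge_singletons_eq_sum) (use bideg10_support[OF assms] inj_nat3 in auto)
  also have "\<dots> = (\<Sum>a\<in>UNIV. if a = c then \<xi> {nat3 c} * cnj (\<xi> {nat3 e}) else 0)"
  proof (intro sum.cong refl)
    fix a
    have ne: "nat3 a \<noteq> nat3 e + 3" using nat3_less[of a] by linarith
    show "(if {nat3 a} \<subseteq> idx11 c e then shuffle_sign {nat3 a} (idx11 c e - {nat3 a}) * \<xi> {nat3 a} * conjf \<xi> (idx11 c e - {nat3 a}) else 0)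
        = (if a = c then \<xi> {nat3 c} * cnj (\<xi> {nat3 e}) else 0)"
    proof (cases "a = c")
      case True
      have d: "idx11 c e - {nat3 c} = {nat3 e + 3}" unfolding idx11_def using ne True by auto
      have nl: "\<not> nat3 e + 3 < nat3 c" using nat3_less[of c] by linarith
      have s: "shuffle_sign {nat3 c} {nat3 e + 3} = 1"
        using nl by (simp add: shuffle_sign_eval)
      show ?thesis using True d s by (simp add: idx11_def conjf_dzbar)
    next
      case False
      then have "\<not> {nat3 a} \<subseteq> idx11 c e" unfolding idx11_def using ne by auto
      then show ?thesis using False by simp
    qed
  qed
  also have "\<dots> = \<xi> {nat3 c} * cnj (\<xi> {nat3 e})" by simp
  finally show ?thesis .
qed

lemma csig_idx22: "csig ` idx22 b a = idx22 a b \<and>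
   (-1::complex) ^ card {(p, q). p \<in> idx22 a b \<and> q \<in> idx22 a b \<and> p < q \<and> csig q < csig p} = 1"
proof -
  have "a = 1 \<or> a = 2 \<or> a = 3" "b = 1 \<or> b = 2 \<or> b = 3" by (rule exhaust_3)+
  then show ?thesis unfolding card_pairs[OF finite_idx22 finite_idx22]
    by (elim disjE) (simp_all add: idx22_def idx11_def atLeastLessThan_6_eq insert_Diff_if csig_def set_eq_subset)
qed

lemma conjf_idx22: "conjf \<alpha> (idx22 b a) = cnj (\<alpha> (idx22 a b))"
proof -
  have sub: "idx22 b a \<subseteq> {0..<6}" by (simp add: idx22_def)
  have "conjf \<alpha> (idx22 b a) = (-1) ^ card {(p, q). p \<in> idx22 a b \<and> q \<in> idx22 a b \<and> p < q \<and> csig q < csig p} * cnj (\<alpha> (idx22 a b))"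
    unfolding conjf_def Let_def if_P[OF sub] csig_idx22[THEN conjunct1] ..
  then show ?thesis using csig_idx22[THEN conjunct2, of a b] by simp
qed

section \<open>Hermitian matrices\<close>

lemma hermitian_metric_cnj: "hermitian_metric W \<Longrightarrow> cnj (W $ a $ b) = W $ b $ a"
proof -
  assume "hermitian_metric W"
  then have "W $ a $ b = cnj (W $ b $ a)" unfolding hermitian_metric_def by blast
  then show ?thesis by simp
qed

lemma hermitian_metric_invertible: assumes "hermitian_metric W" shows "invertible W"
proof (rule ccontr)
  assume "\<not> invertible W"
  then obtain v where v: "W *v v = 0" "v \<noteq> 0"
    using invertible_left_inverse matrix_left_invertible_ker by blast
  have "(\<Sum>a\<in>UNIV. \<Sum>b\<in>UNIV. W$a$b * v$b * cnj (v$a)) = (\<Sum>a\<in>UNIV. cnj (v$a) * (W *v v)$a)"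
    by (simp add: matrix_vector_mult_def sum_distrib_left mult_ac)
  also have "\<dots> = 0" using v by simp
  finally have "Re (\<Sum>a\<in>UNIV. \<Sum>b\<in>UNIV. W$a$b * v$b * cnj (v$a)) = 0" by simp
  moreover have "0 < Re (\<Sum>a\<in>UNIV. \<Sum>b\<in>UNIV. W$a$b * v$b * cnj (v$a))"
    using assms v(2) unfolding hermitian_metric_def by blast
  ultimately show False by simp
qed

lemma hermitian_metric_det_nonzero: "hermitian_metric W \<Longrightarrow> det W \<noteq> 0"
  using hermitian_metric_invertible invertible_det_nz by blast

lemma hermitian_metric_cnj_det: assumes "hermitian_metric W" shows "cnj (det W) = det W"
  by (simp add: det_3 hermitian_metric_cnj[OF assms] algebra_simps)

lemma matrix_inv_invertible:
  fixes A :: "'a::semiring_1^'n^'n"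
  assumes "invertible A"
  shows "A ** matrix_inv A = mat 1" "matrix_inv A ** A = mat 1"
proof -
  have "\<exists>A'. A ** A' = mat 1 \<and> A' ** A = mat 1" using assms unfolding invertible_def by blast
  then have "A ** matrix_inv A = mat 1 \<and> matrix_inv A ** A = mat 1"
    unfolding matrix_inv_def by (rule someI_ex)
  then show "A ** matrix_inv A = mat 1" "matrix_inv A ** A = mat 1" by auto
qed

lemmas matrix_inv_hermitian_metric = matrix_inv_invertible[OF hermitian_metric_invertible]

lemma matrix_mult3_entry: "(A ** B ** C) $ a $ b = (\<Sum>c\<in>UNIV. \<Sum>e\<in>UNIV. A $ a $ c * B $ c $ e * C $ e $ b)"
proof -
  have "(A ** B ** C) $ a $ b = (\<Sum>e\<in>UNIV. \<Sum>c\<in>UNIV. A $ a $ c * B $ c $ e * C $ e $ b)"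
    by (simp add: matrix_matrix_mult_def sum_distrib_right)
  also have "\<dots> = (\<Sum>c\<in>UNIV. \<Sum>e\<in>UNIV. A $ a $ c * B $ c $ e * C $ e $ b)"
    by (rule sum.swap)
  finally show ?thesis .
qed

text \<open>The adjugate; indices are added cyclically in the type \<open>3\<close>.\<close>

definition adj3 :: "complex^3^3 \<Rightarrow> complex^3^3" where
  "adj3 W = (\<chi> i j. W$(j+1)$(i+1) * W$(j+2)$(i+2) - W$(j+1)$(i+2) * W$(j+2)$(i+1))"

lemma adj3_mult: "adj3 W ** W = (\<chi> i j. if i = j then det W else 0)"
  unfolding vec_eq_iff forall_3 adj3_def matrix_matrix_mult_def
  apply (simp add: sum_3 det_3)
  apply (simp_all add: algebra_simps)
  done

lemma det_mult_matrix_inv: assumes "hermitian_metric W" shows "det W * matrix_inv W $ i $ j = adj3 W $ i $ j"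
proof -
  have "adj3 W = adj3 W ** (W ** matrix_inv W)" using matrix_inv_hermitian_metric[OF assms] by simp
  also have "\<dots> = (adj3 W ** W) ** matrix_inv W" by (simp add: matrix_mul_assoc)
  finally have "adj3 W $ i $ j = ((\<chi> i j. if i = j then det W else 0) ** matrix_inv W) $ i $ j"
    by (simp add: adj3_mult)
  also have "\<dots> = det W * matrix_inv W $ i $ j"
    by (simp add: matrix_matrix_mult_def if_distrib if_distribR cong: if_cong)
  finally show ?thesis by simp
qed

lemma adj3_cnj: assumes "hermitian_metric W" shows "cnj (adj3 W $ i $ j) = adj3 W $ j $ i"
  unfolding adj3_def by (simp add: hermitian_metric_cnj[OF assms] algebra_simps)

lemma matrix_inv_cnj: assumes "hermitian_metric W" shows "cnj (matrix_inv W $ i $ j) = matrix_inv W $ j $ i"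
proof -
  have d: "det W \<noteq> 0" using hermitian_metric_det_nonzero[OF assms] .
  have "matrix_inv W $ i $ j = adj3 W $ i $ j / det W" using det_mult_matrix_inv[OF assms, of i j] d by (simp add: field_simps)
  moreover have "matrix_inv W $ j $ i = adj3 W $ j $ i / det W" using det_mult_matrix_inv[OF assms, of j i] d by (simp add: field_simps)
  ultimately show ?thesis using adj3_cnj[OF assms] hermitian_metric_cnj_det[OF assms] by simp
qed

section \<open>The Hodge star on (2,2)-forms\<close>

lemma omega_eq_form11: "omega W = form11 (\<lambda>a b. \<i> * W $ b $ a)"
  unfolding omega_def form11_def sum_lessThan_3 by (simp add: idx11_def cong: if_cong)

lemma has_bidegree_omega: "has_bidegree 1 1 (omega W)" unfolding omega_eq_form11 by (rule has_bidegree_form11)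

lemma has_bidegree_omega3: "has_bidegree 3 3 (omega3 W)"
proof -
  have "has_bidegree (1 + (1 + 1)) (1 + (1 + 1)) (wedge (omega W) (wedge (omega W) (omega W)))"
    by (intro has_bidegree_wedge has_bidegree_omega)
  then show ?thesis unfolding omega3_def by (simp add: numeral_3_eq_3)
qed

lemma inner11_eq_sum: "inner11 W \<phi> \<psi> = (\<Sum>a\<in>UNIV. \<Sum>b\<in>UNIV. \<Sum>c\<in>UNIV. \<Sum>e\<in>UNIV.
   matrix_inv W $ a $ c * matrix_inv W $ e $ b * \<phi> (idx11 a b) * cnj (\<psi> (idx11 c e)))"
  unfolding inner11_def ginv_def coef11_def sum_lessThan_3 by (simp add: idx11_def cong: if_cong)

lemma omega3_top_coef: "omega3 W {0..<6} = 6 * \<i> * det W"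
proof -
  have "omega3 W {0..<6} = (\<Sum>c\<in>UNIV. \<Sum>e\<in>UNIV. (-1) ^ (nat3 c + nat3 e) * (\<i> * W $ e $ c) *
     (\<Sum>c'\<in>UNIV. \<Sum>e'\<in>UNIV. if c' \<noteq> c \<and> e' \<noteq> e then
      (-1) ^ ((if nat3 (third c c') < nat3 c' then 1 else 0) + 1 + (if nat3 (third e e') < nat3 e' then 1 else 0))
       * (\<i> * W $ e' $ c') * (\<i> * W $ (third e e') $ (third c c')) else 0))"
    unfolding omega3_def omega_eq_form11 wedge_bideg11_top[OF has_bidegree_form11]
      wedge_bideg11_idx22[OF has_bidegree_form11] form11_idx11 shuffle_sign_idx11_idx22 shuffle_sign_idx11 ..
  also have "\<dots> = 6 * \<i> * det W"
    by (simp add: sum_3 third_def det_3) (simp add: algebra_simps)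
  finally show ?thesis .
qed

definition coef22 :: "cform \<Rightarrow> 3 \<Rightarrow> 3 \<Rightarrow> complex" where "coef22 \<Psi> a b = \<Psi> (idx22 a b)"

definition mat22 :: "cform \<Rightarrow> complex^3^3" where "mat22 \<Psi> = (\<chi> a b. (-1) ^ (nat3 a + nat3 b) * coef22 \<Psi> a b)"

definition lower22 :: "complex^3^3 \<Rightarrow> cform \<Rightarrow> complex^3^3" where "lower22 W \<Psi> = W ** mat22 \<Psi> ** W"

definition hodge22 :: "complex^3^3 \<Rightarrow> cform \<Rightarrow> cform" where
  "hodge22 W \<Psi> = form11 (\<lambda>a b. (\<i> / det W) * lower22 W \<Psi> $ b $ a)"

definition trace22 :: "complex^3^3 \<Rightarrow> cform \<Rightarrow> complex" where
  "trace22 W \<Psi> = (\<Sum>a\<in>UNIV. \<Sum>f\<in>UNIV. mat22 \<Psi> $ a $ f * W $ f $ a)"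

lemma coef22_cnj: "real_form \<Psi> \<Longrightarrow> cnj (coef22 \<Psi> a b) = coef22 \<Psi> b a"
  unfolding real_form_def coef22_def by (metis conjf_idx22)

lemma mat22_cnj: "real_form \<Psi> \<Longrightarrow> cnj (mat22 \<Psi> $ a $ b) = mat22 \<Psi> $ b $ a"
  unfolding mat22_def by (simp add: coef22_cnj add.commute)

lemma lower22_cnj: assumes "hermitian_metric W" "real_form \<Psi>"
  shows "cnj (lower22 W \<Psi> $ i $ j) = lower22 W \<Psi> $ j $ i"
  unfolding lower22_def matrix_matrix_mult_def
  by (simp add: sum_3 hermitian_metric_cnj[OF assms(1)] mat22_cnj[OF assms(2)] algebra_simps)

lemma matrix_inv_lower22: assumes "hermitian_metric W" shows "matrix_inv W ** lower22 W \<Psi> ** matrix_inv W = mat22 \<Psi>"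
proof -
  have "matrix_inv W ** lower22 W \<Psi> ** matrix_inv W = (matrix_inv W ** W) ** mat22 \<Psi> ** (W ** matrix_inv W)"
    unfolding lower22_def by (simp add: matrix_mul_assoc)
  then show ?thesis using matrix_inv_hermitian_metric[OF assms] by simp
qed

lemma wedge_bideg11_top_mat22: assumes "has_bidegree 1 1 \<phi>"
  shows "wedge \<phi> \<Psi> {0..<6} = (\<Sum>c\<in>UNIV. \<Sum>e\<in>UNIV. \<phi> (idx11 c e) * mat22 \<Psi> $ c $ e)"
  unfolding wedge_bideg11_top[OF assms] shuffle_sign_idx11_idx22 mat22_def coef22_def by (simp add: mult_ac)

lemma inner11_hodge22: assumes "hermitian_metric W" "real_form \<Psi>"
  shows "inner11 W \<phi> (hodge22 W \<Psi>) = (- \<i> / det W) * (\<Sum>a\<in>UNIV. \<Sum>b\<in>UNIV. \<phi> (idx11 a b) * mat22 \<Psi> $ a $ b)"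
proof -
  let ?G = "matrix_inv W" and ?X = "lower22 W \<Psi>" and ?d = "det W"
  have c: "cnj (\<i> / ?d * ?X $ e $ c) = (- \<i> / ?d) * ?X $ c $ e" for c e
    using hermitian_metric_cnj_det[OF assms(1)] lower22_cnj[OF assms] by simp
  have "inner11 W \<phi> (hodge22 W \<Psi>) = (\<Sum>a\<in>UNIV. \<Sum>b\<in>UNIV. \<Sum>c\<in>UNIV. \<Sum>e\<in>UNIV.
      ?G $ a $ c * ?G $ e $ b * \<phi> (idx11 a b) * ((- \<i> / ?d) * ?X $ c $ e))"
    unfolding inner11_eq_sum hodge22_def form11_idx11 c ..
  also have "\<dots> = (- \<i> / ?d) * (\<Sum>a\<in>UNIV. \<Sum>b\<in>UNIV. \<phi> (idx11 a b) * (?G ** ?X ** ?G) $ a $ b)"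
    unfolding matrix_mult3_entry
    by (simp add: sum_distrib_left mult_ac)
  finally show ?thesis using matrix_inv_lower22[OF assms(1)] by simp
qed

lemma wedge_eq_inner11_hodge22:
  assumes herm: "hermitian_metric W" and b22: "has_bidegree 2 2 \<Psi>" and rf: "real_form \<Psi>"
    and \<phi>: "has_bidegree 1 1 \<phi>"
  shows "wedge \<phi> \<Psi> = smult (inner11 W \<phi> (hodge22 W \<Psi>) / 6) (omega3 W)"
  unfolding smult_def
proof
  fix S show "wedge \<phi> \<Psi> S = inner11 W \<phi> (hodge22 W \<Psi>) / 6 * omega3 W S"
  proof (cases "S = {0..<6}")
    case True
    show ?thesis unfolding True wedge_bideg11_top_mat22[OF \<phi>] inner11_hodge22[OF herm rf] omega3_top_coef
      using hermitian_metric_det_nonzero[OF herm] by (simp add: field_simps)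
  next
    case False
    have "has_bidegree (1 + 2) (1 + 2) (wedge \<phi> \<Psi>)" by (rule has_bidegree_wedge[OF \<phi> b22])
    then have "wedge \<phi> \<Psi> S = 0" using bideg33_outside_top False by (simp add: numeral_3_eq_3)
    moreover have "omega3 W S = 0" using bideg33_outside_top[OF has_bidegree_omega3 False] .
    ultimately show ?thesis by simp
  qed
qed

lemma sum_sum_delta_mult: fixes a b :: 3 shows "(\<Sum>c\<in>UNIV. \<Sum>e\<in>UNIV. (if c = a \<and> e = b then 1 else 0) * (f c e :: complex)) = f a b"
proof -
  have inner: "(\<Sum>e\<in>UNIV. (if c = a \<and> e = b then 1 else 0) * f c e) = (if c = a then f a b else 0)" for c
  proof (cases "c = a")
    case True
    have "(\<Sum>e\<in>UNIV. (if c = a \<and> e = b then 1 else 0) * f c e) = (\<Sum>e\<in>UNIV. if e = b then f a e else 0)"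
      using True by (intro sum.cong refl) simp
    also have "\<dots> = f a b" by (subst sum.delta) auto
    finally show ?thesis using True by simp
  qed simp
  show ?thesis unfolding inner by simp
qed

lemma inner11_form11_delta:
  "inner11 W (form11 (\<lambda>c e. if c = a \<and> e = b then 1 else 0)) \<psi>
     = (matrix_inv W ** (\<chi> c e. cnj (\<psi> (idx11 c e))) ** matrix_inv W) $ a $ b"
proof -
  let ?G = "matrix_inv W"
  have "inner11 W (form11 (\<lambda>c e. if c = a \<and> e = b then 1 else 0)) \<psi>
      = (\<Sum>c\<in>UNIV. \<Sum>e\<in>UNIV. (if c = a \<and> e = b then 1 else 0) *
          (\<Sum>c'\<in>UNIV. \<Sum>e'\<in>UNIV. ?G $ c $ c' * ?G $ e' $ e * cnj (\<psi> (idx11 c' e'))))"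
    unfolding inner11_eq_sum form11_idx11 by (simp add: sum_distrib_left mult_ac)
  also have "\<dots> = (\<Sum>c'\<in>UNIV. \<Sum>e'\<in>UNIV. ?G $ a $ c' * ?G $ e' $ b * cnj (\<psi> (idx11 c' e')))"
    by (rule sum_sum_delta_mult)
  finally show ?thesis unfolding matrix_mult3_entry by (simp add: mult_ac)
qed

lemma inner11_right_unique:
  assumes herm: "hermitian_metric W" and "has_bidegree 1 1 \<psi>\<^sub>1" "has_bidegree 1 1 \<psi>\<^sub>2"
    and inner: "\<And>\<phi>. has_bidegree 1 1 \<phi> \<Longrightarrow> inner11 W \<phi> \<psi>\<^sub>1 = inner11 W \<phi> \<psi>\<^sub>2"
  shows "\<psi>\<^sub>1 = \<psi>\<^sub>2"
proof (rule bideg11_eqI[OF assms(2,3)])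
  define Y where "Y \<psi> = (\<chi> c e. cnj (\<psi> (idx11 c e)))" for \<psi>
  let ?G = "matrix_inv W"
  have "(?G ** Y \<psi>\<^sub>1 ** ?G) $ a $ b = (?G ** Y \<psi>\<^sub>2 ** ?G) $ a $ b" for a b
    using inner[OF has_bidegree_form11, of "\<lambda>c e. if c = a \<and> e = b then 1 else 0"]
    unfolding inner11_form11_delta Y_def .
  then have "?G ** Y \<psi>\<^sub>1 ** ?G = ?G ** Y \<psi>\<^sub>2 ** ?G" by (simp add: vec_eq_iff)
  moreover have "W ** (?G ** M ** ?G) ** W = M" for M
  proof -
    have "W ** (?G ** M ** ?G) ** W = (W ** ?G) ** M ** (?G ** W)" by (simp add: matrix_mul_assoc)
    then show ?thesis using matrix_inv_hermitian_metric[OF herm] by simp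
  qed
  ultimately have "Y \<psi>\<^sub>1 = Y \<psi>\<^sub>2" by metis
  then show "\<psi>\<^sub>1 (idx11 c e) = \<psi>\<^sub>2 (idx11 c e)" for c e
    unfolding Y_def vec_eq_iff by simp
qed

lemma hodge_eq_hodge22:
  assumes herm: "hermitian_metric W" and b22: "has_bidegree 2 2 \<Psi>" and rf: "real_form \<Psi>"
  shows "hodge W \<Psi> = hodge22 W \<Psi>"
  unfolding hodge_def real_form_def[THEN iffD1, OF rf]
proof (rule the_equality)
  show "has_bidegree 1 1 (hodge22 W \<Psi>) \<and> (\<forall>\<phi>. has_bidegree 1 1 \<phi> \<longrightarrow>
      wedge \<phi> \<Psi> = smult (inner11 W \<phi> (hodge22 W \<Psi>) / 6) (omega3 W))"
    using wedge_eq_inner11_hodge22[OF assms] has_bidegree_form11 unfolding hodge22_def by blast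
next
  fix \<eta> assume \<eta>: "has_bidegree 1 1 \<eta> \<and> (\<forall>\<phi>. has_bidegree 1 1 \<phi> \<longrightarrow>
      wedge \<phi> \<Psi> = smult (inner11 W \<phi> \<eta> / 6) (omega3 W))"
  show "\<eta> = hodge22 W \<Psi>"
  proof (rule inner11_right_unique[OF herm])
    fix \<phi> assume \<phi>: "has_bidegree 1 1 \<phi>"
    have "smult (inner11 W \<phi> \<eta> / 6) (omega3 W) = smult (inner11 W \<phi> (hodge22 W \<Psi>) / 6) (omega3 W)"
      using \<eta> \<phi> wedge_eq_inner11_hodge22[OF assms \<phi>] by simp
    then have "inner11 W \<phi> \<eta> / 6 * omega3 W {0..<6} = inner11 W \<phi> (hodge22 W \<Psi>) / 6 * omega3 W {0..<6}"
      unfolding smult_def by meson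
    then show "inner11 W \<phi> \<eta> = inner11 W \<phi> (hodge22 W \<Psi>)"
      using hermitian_metric_det_nonzero[OF herm] by (simp add: omega3_top_coef)
  qed (use \<eta> has_bidegree_form11 hodge22_def in auto)
qed

lemma inner11_hodge22_omega:
  assumes herm: "hermitian_metric W" and rf: "real_form \<Psi>"
  shows "inner11 W (hodge22 W \<Psi>) (omega W) = trace22 W \<Psi> / det W"
proof -
  let ?G = "matrix_inv W" and ?X = "lower22 W \<Psi>" and ?d = "det W"
  have c: "cnj (\<i> * W $ e $ c) = - \<i> * W $ c $ e" for c e using hermitian_metric_cnj[OF herm] by simp
  have "inner11 W (hodge22 W \<Psi>) (omega W) = (\<Sum>a\<in>UNIV. \<Sum>b\<in>UNIV. \<Sum>c\<in>UNIV. \<Sum>e\<in>UNIV.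
      ?G $ a $ c * ?G $ e $ b * (\<i> / ?d * ?X $ b $ a) * (- \<i> * W $ c $ e))"
    unfolding inner11_eq_sum hodge22_def omega_eq_form11 form11_idx11 c ..
  also have "\<dots> = (\<i> / ?d * - \<i>) * (\<Sum>a\<in>UNIV. \<Sum>b\<in>UNIV. ?X $ b $ a * (?G ** W ** ?G) $ a $ b)"
    unfolding matrix_mult3_entry by (simp add: sum_distrib_left mult_ac)
  also have "?G ** W ** ?G = ?G" using matrix_inv_hermitian_metric[OF herm] by simp
  also have "(\<Sum>a\<in>UNIV. \<Sum>b\<in>UNIV. ?X $ b $ a * ?G $ a $ b) = (\<Sum>a\<in>UNIV. (?G ** ?X) $ a $ a)"
    by (simp add: matrix_matrix_mult_def mult_ac)
  also have "?G ** ?X = mat22 \<Psi> ** W"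
  proof -
    have "?G ** ?X = (?G ** W) ** mat22 \<Psi> ** W" unfolding lower22_def by (simp add: matrix_mul_assoc)
    then show ?thesis using matrix_inv_hermitian_metric[OF herm] by simp
  qed
  also have "(\<Sum>a\<in>UNIV. (mat22 \<Psi> ** W) $ a $ a) = trace22 W \<Psi>"
    unfolding trace22_def by (simp add: matrix_matrix_mult_def)
  finally show ?thesis by (simp add: field_simps)
qed

lemma tstar_eq_form11:
  assumes "hermitian_metric W" "has_bidegree 2 2 \<Psi>" "real_form \<Psi>"
  shows "tstar W \<Omega> \<Psi> = smult (1 / (2 * complex_of_real (Omega_norm W \<Omega>)))
    (form11 (\<lambda>l m. \<i> / det W * (trace22 W \<Psi> * W $ m $ l - lower22 W \<Psi> $ m $ l)))"
  unfolding tstar_def hodge_eq_hodge22[OF assms] inner11_hodge22_omega[OF assms(1,3)]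
  unfolding omega_eq_form11 hodge22_def form11_diff
  by (simp add: algebra_simps)

section \<open>The symbol identity\<close>

definition coef10 :: "cform \<Rightarrow> 3 \<Rightarrow> complex" where "coef10 \<xi> c = \<xi> {nat3 c}"

definition coef01 :: "cform \<Rightarrow> 3 \<Rightarrow> complex" where "coef01 \<xi> c = cnj (\<xi> {nat3 c})"

lemma covec_norm2_eq_sum: "covec_norm2 W \<xi> = Re (\<Sum>a\<in>UNIV. \<Sum>b\<in>UNIV. matrix_inv W $ a $ b * \<xi> {nat3 a} * cnj (\<xi> {nat3 b}))"
  unfolding covec_norm2_def ginv_def sum_lessThan_3 by simp

lemma covec_norm2_eq:
  assumes herm: "hermitian_metric W"
  shows "complex_of_real (covec_norm2 W \<xi>) = (\<Sum>a\<in>UNIV. \<Sum>b\<in>UNIV. matrix_inv W $ a $ b * coef10 \<xi> a * coef01 \<xi> b)"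
proof -
  define s where "s = (\<Sum>a\<in>UNIV. \<Sum>b\<in>UNIV. matrix_inv W $ a $ b * coef10 \<xi> a * coef01 \<xi> b)"
  have "cnj s = (\<Sum>a\<in>UNIV. \<Sum>b\<in>UNIV. matrix_inv W $ b $ a * coef01 \<xi> a * coef10 \<xi> b)"
    unfolding s_def by (simp add: matrix_inv_cnj[OF herm] coef10_def coef01_def)
  also have "\<dots> = (\<Sum>b\<in>UNIV. \<Sum>a\<in>UNIV. matrix_inv W $ b $ a * coef01 \<xi> a * coef10 \<xi> b)" by (rule sum.swap)
  also have "\<dots> = s" unfolding s_def by (simp add: mult_ac)
  finally have "complex_of_real (Re s) = s" by (simp add: Reals_cnj_iff[symmetric] of_real_Re)
  moreover have "covec_norm2 W \<xi> = Re s" unfolding covec_norm2_eq_sum s_def coef10_def coef01_def ..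
  ultimately show ?thesis unfolding s_def by simp
qed

lemma det_mult_covec_sum:
  assumes herm: "hermitian_metric W"
  shows "det W * (\<Sum>a\<in>UNIV. \<Sum>b\<in>UNIV. matrix_inv W $ a $ b * coef10 \<xi> a * coef01 \<xi> b)
       = (\<Sum>f\<in>UNIV. \<Sum>g\<in>UNIV. adj3 W $ f $ g * coef10 \<xi> f * coef01 \<xi> g)"
  by (simp add: det_mult_matrix_inv[OF herm, symmetric] sum_distrib_left mult_ac)

definition wedge10_coef :: "cform \<Rightarrow> cform \<Rightarrow> 3 \<Rightarrow> complex" where
  "wedge10_coef \<xi> \<Psi> b = (\<Sum>a\<in>UNIV. (-1) ^ nat3 a * coef10 \<xi> a * coef22 \<Psi> a b)"

definition wedge01_coef :: "cform \<Rightarrow> cform \<Rightarrow> 3 \<Rightarrow> complex" where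
  "wedge01_coef \<xi> \<Psi> a = (\<Sum>e\<in>UNIV. (-1) ^ nat3 e * coef01 \<xi> e * coef22 \<Psi> a e)"

lemma wedge_bideg10_compl_dzbar:
  assumes hx: "has_bidegree 1 0 \<xi>"
  shows "wedge \<xi> \<Psi> ({0..<6} - {nat3 b + 3}) = wedge10_coef \<xi> \<Psi> b"
proof -
  let ?U = "{0..<6} - {nat3 b + 3}"
  have "wedge \<xi> \<Psi> ?U = (\<Sum>a\<in>UNIV. if {nat3 a} \<subseteq> ?U then
      shuffle_sign {nat3 a} (?U - {nat3 a}) * \<xi> {nat3 a} * \<Psi> (?U - {nat3 a}) else 0)"
    by (rule wedge_singletons_eq_sum) (use bideg10_support[OF hx] inj_nat3 in auto)
  also have "\<dots> = wedge10_coef \<xi> \<Psi> b" unfolding wedge10_coef_def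
  proof (intro sum.cong refl)
    fix a
    have lt: "nat3 a < 3" "nat3 b < 3" by simp_all
    have "nat3 a < 6" "nat3 a \<noteq> nat3 b + 3" using lt by linarith+
    then have s: "{nat3 a} \<subseteq> ?U" by simp
    have d: "?U - {nat3 a} = idx22 a b" unfolding idx22_def idx11_def by auto
    show "(if {nat3 a} \<subseteq> ?U then shuffle_sign {nat3 a} (?U - {nat3 a}) * \<xi> {nat3 a} * \<Psi> (?U - {nat3 a}) else 0)
        = (-1) ^ nat3 a * coef10 \<xi> a * coef22 \<Psi> a b"
      using s unfolding d by (simp add: shuffle_sign_dz_idx22 coef10_def coef22_def)
  qed
  finally show ?thesis .
qed

lemma wedge_conjf_bideg10_compl_dz:
  assumes hx: "has_bidegree 1 0 \<xi>"
  shows "wedge (conjf \<xi>) \<Psi> ({0..<6} - {nat3 a}) = wedge01_coef \<xi> \<Psi> a"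
proof -
  let ?V = "{0..<6} - {nat3 a}"
  have inj: "inj (\<lambda>e. nat3 e + 3)" by (simp add: inj_def)
  have "wedge (conjf \<xi>) \<Psi> ?V = (\<Sum>e\<in>UNIV. if {nat3 e + 3} \<subseteq> ?V then
      shuffle_sign {nat3 e + 3} (?V - {nat3 e + 3}) * conjf \<xi> {nat3 e + 3} * \<Psi> (?V - {nat3 e + 3}) else 0)"
    by (rule wedge_singletons_eq_sum[of "conjf \<xi>" "\<lambda>e. nat3 e + 3"]) (use conjf_bideg10_support[OF hx] inj in auto)
  also have "\<dots> = wedge01_coef \<xi> \<Psi> a" unfolding wedge01_coef_def
  proof (intro sum.cong refl)
    fix e
    have lt: "nat3 a < 3" "nat3 e < 3" by simp_all
    have "nat3 e + 3 < 6" "nat3 e + 3 \<noteq> nat3 a" using lt by linarith+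
    then have s: "{nat3 e + 3} \<subseteq> ?V" by simp
    have d: "?V - {nat3 e + 3} = idx22 a e" unfolding idx22_def idx11_def by auto
    show "(if {nat3 e + 3} \<subseteq> ?V then shuffle_sign {nat3 e + 3} (?V - {nat3 e + 3}) * conjf \<xi> {nat3 e + 3} * \<Psi> (?V - {nat3 e + 3}) else 0)
        = (-1) ^ nat3 e * coef01 \<xi> e * coef22 \<Psi> a e"
      using s unfolding d by (simp add: shuffle_sign_dzbar_idx22 coef01_def coef22_def conjf_dzbar)
  qed
  finally show ?thesis .
qed

definition sign11 :: "3 \<Rightarrow> 3 \<Rightarrow> 3 \<Rightarrow> 3 \<Rightarrow> complex" where
  "sign11 a b c e = (-1) ^ ((if nat3 (third a c) < nat3 c then 1 else 0) + 1 + (if nat3 (third b e) < nat3 e then 1 else 0))"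

lemma wedge_conjf_form11_idx22:
  assumes "has_bidegree 1 0 \<xi>"
  shows "wedge (wedge \<xi> (conjf \<xi>)) (form11 f) (idx22 a b) = (\<Sum>c\<in>UNIV. \<Sum>e\<in>UNIV.
    if c \<noteq> a \<and> e \<noteq> b then sign11 a b c e * (coef10 \<xi> c * coef01 \<xi> e) * f (third a c) (third b e) else 0)"
  unfolding wedge_bideg11_idx22[OF has_bidegree_wedge_conjf[OF assms]] wedge_conjf_idx11[OF assms]
    form11_idx11 shuffle_sign_idx11 sign11_def coef10_def coef01_def
  by simp

text \<open>\<open>defect W \<xi> \<Psi> a b\<close> is \<open>-det W\<close> times the coefficient at \<open>idx22 a b\<close> of
  \<open>i \<xi> \<and> conj \<xi> \<and> (tr (L W) / det W \<omega> - \<star>\<Psi>) - |\<xi>|\<^sup>2 \<Psi>\<close>. The lemmas \<open>defect_ab\<close> are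
  certificates expressing it through the coefficients of \<open>\<xi> \<and> \<Psi>\<close> and \<open>conj \<xi> \<and> \<Psi>\<close>;
  each is checked by full expansion.\<close>

definition defect :: "complex^3^3 \<Rightarrow> cform \<Rightarrow> cform \<Rightarrow> 3 \<Rightarrow> 3 \<Rightarrow> complex" where
  "defect W \<xi> \<Psi> a b = (\<Sum>c\<in>UNIV. \<Sum>e\<in>UNIV. if c \<noteq> a \<and> e \<noteq> b then
      sign11 a b c e * (coef10 \<xi> c * coef01 \<xi> e) * (trace22 W \<Psi> * W $ (third b e) $ (third a c) - lower22 W \<Psi> $ (third b e) $ (third a c)) else 0)
    + (\<Sum>f\<in>UNIV. \<Sum>g\<in>UNIV. adj3 W $ f $ g * coef10 \<xi> f * coef01 \<xi> g) * coef22 \<Psi> a b"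

lemma defect_00: "defect W \<xi> \<Psi> 0 0 =
    (W $ 0 $ 1 * W $ 1 $ 2 * coef01 \<xi> 2 - W $ 0 $ 1 * W $ 2 $ 2 * coef01 \<xi> 1 - W $ 0 $ 2 * W $ 1 $ 1 * coef01 \<xi> 2 + W $ 0 $ 2 * W $ 2 $ 1 * coef01 \<xi> 1) * wedge10_coef \<xi> \<Psi> 0
    + (W $ 1 $ 1 * W $ 2 $ 2 * coef01 \<xi> 1 - W $ 1 $ 2 * W $ 2 $ 1 * coef01 \<xi> 1) * wedge10_coef \<xi> \<Psi> 1
    + (- W $ 1 $ 1 * W $ 2 $ 2 * coef01 \<xi> 2 + W $ 1 $ 2 * W $ 2 $ 1 * coef01 \<xi> 2) * wedge10_coef \<xi> \<Psi> 2
    + (W $ 1 $ 0 * W $ 2 $ 1 * coef10 \<xi> 2 - W $ 1 $ 0 * W $ 2 $ 2 * coef10 \<xi> 1 - W $ 1 $ 1 * W $ 2 $ 0 * coef10 \<xi> 2 + W $ 1 $ 1 * W $ 2 $ 2 * coef10 \<xi> 0 + W $ 1 $ 2 * W $ 2 $ 0 * coef10 \<xi> 1 - W $ 1 $ 2 * W $ 2 $ 1 * coef10 \<xi> 0) * wedge01_coef \<xi> \<Psi> 0"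
  unfolding defect_def sign11_def wedge10_coef_def wedge01_coef_def trace22_def lower22_def matrix_mult3_entry mat22_def adj3_def
  by (simp add: sum_3 third_def type_3_add_simps algebra_simps)

lemma defect_01: "defect W \<xi> \<Psi> 0 1 =
    (- W $ 0 $ 1 * W $ 2 $ 2 * coef01 \<xi> 0 + W $ 0 $ 2 * W $ 2 $ 1 * coef01 \<xi> 0) * wedge10_coef \<xi> \<Psi> 0
    + (W $ 0 $ 1 * W $ 1 $ 2 * coef01 \<xi> 2 - W $ 0 $ 2 * W $ 1 $ 1 * coef01 \<xi> 2 + W $ 1 $ 1 * W $ 2 $ 2 * coef01 \<xi> 0 - W $ 1 $ 2 * W $ 2 $ 1 * coef01 \<xi> 0) * wedge10_coef \<xi> \<Psi> 1
    + (- W $ 0 $ 1 * W $ 2 $ 2 * coef01 \<xi> 2 + W $ 0 $ 2 * W $ 2 $ 1 * coef01 \<xi> 2) * wedge10_coef \<xi> \<Psi> 2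
    + (W $ 0 $ 0 * W $ 2 $ 1 * coef10 \<xi> 2 - W $ 0 $ 0 * W $ 2 $ 2 * coef10 \<xi> 1 - W $ 0 $ 1 * W $ 2 $ 0 * coef10 \<xi> 2 + W $ 0 $ 1 * W $ 2 $ 2 * coef10 \<xi> 0 + W $ 0 $ 2 * W $ 2 $ 0 * coef10 \<xi> 1 - W $ 0 $ 2 * W $ 2 $ 1 * coef10 \<xi> 0) * wedge01_coef \<xi> \<Psi> 0"
  unfolding defect_def sign11_def wedge10_coef_def wedge01_coef_def trace22_def lower22_def matrix_mult3_entry mat22_def adj3_def
  by (simp add: sum_3 third_def type_3_add_simps algebra_simps)

lemma defect_02: "defect W \<xi> \<Psi> 0 2 =
    (- W $ 0 $ 1 * W $ 1 $ 2 * coef01 \<xi> 0 + W $ 0 $ 2 * W $ 1 $ 1 * coef01 \<xi> 0) * wedge10_coef \<xi> \<Psi> 0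
    + (W $ 0 $ 1 * W $ 1 $ 2 * coef01 \<xi> 1 - W $ 0 $ 2 * W $ 1 $ 1 * coef01 \<xi> 1) * wedge10_coef \<xi> \<Psi> 1
    + (- W $ 0 $ 1 * W $ 2 $ 2 * coef01 \<xi> 1 + W $ 0 $ 2 * W $ 2 $ 1 * coef01 \<xi> 1 + W $ 1 $ 1 * W $ 2 $ 2 * coef01 \<xi> 0 - W $ 1 $ 2 * W $ 2 $ 1 * coef01 \<xi> 0) * wedge10_coef \<xi> \<Psi> 2
    + (W $ 0 $ 0 * W $ 1 $ 1 * coef10 \<xi> 2 - W $ 0 $ 0 * W $ 1 $ 2 * coef10 \<xi> 1 - W $ 0 $ 1 * W $ 1 $ 0 * coef10 \<xi> 2 + W $ 0 $ 1 * W $ 1 $ 2 * coef10 \<xi> 0 + W $ 0 $ 2 * W $ 1 $ 0 * coef10 \<xi> 1 - W $ 0 $ 2 * W $ 1 $ 1 * coef10 \<xi> 0) * wedge01_coef \<xi> \<Psi> 0"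
  unfolding defect_def sign11_def wedge10_coef_def wedge01_coef_def trace22_def lower22_def matrix_mult3_entry mat22_def adj3_def
  by (simp add: sum_3 third_def type_3_add_simps algebra_simps)

lemma defect_10: "defect W \<xi> \<Psi> 1 0 =
    (W $ 0 $ 0 * W $ 1 $ 2 * coef01 \<xi> 2 - W $ 0 $ 0 * W $ 2 $ 2 * coef01 \<xi> 1 - W $ 0 $ 2 * W $ 1 $ 0 * coef01 \<xi> 2 + W $ 0 $ 2 * W $ 2 $ 0 * coef01 \<xi> 1) * wedge10_coef \<xi> \<Psi> 0
    + (W $ 1 $ 0 * W $ 2 $ 2 * coef01 \<xi> 1 - W $ 1 $ 2 * W $ 2 $ 0 * coef01 \<xi> 1) * wedge10_coef \<xi> \<Psi> 1
    + (- W $ 1 $ 0 * W $ 2 $ 2 * coef01 \<xi> 2 + W $ 1 $ 2 * W $ 2 $ 0 * coef01 \<xi> 2) * wedge10_coef \<xi> \<Psi> 2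
    + (W $ 1 $ 0 * W $ 2 $ 1 * coef10 \<xi> 2 - W $ 1 $ 0 * W $ 2 $ 2 * coef10 \<xi> 1 - W $ 1 $ 1 * W $ 2 $ 0 * coef10 \<xi> 2 + W $ 1 $ 1 * W $ 2 $ 2 * coef10 \<xi> 0 + W $ 1 $ 2 * W $ 2 $ 0 * coef10 \<xi> 1 - W $ 1 $ 2 * W $ 2 $ 1 * coef10 \<xi> 0) * wedge01_coef \<xi> \<Psi> 1"
  unfolding defect_def sign11_def wedge10_coef_def wedge01_coef_def trace22_def lower22_def matrix_mult3_entry mat22_def adj3_def
  by (simp add: sum_3 third_def type_3_add_simps algebra_simps)

lemma defect_11: "defect W \<xi> \<Psi> 1 1 =
    (- W $ 0 $ 0 * W $ 2 $ 2 * coef01 \<xi> 0 + W $ 0 $ 2 * W $ 2 $ 0 * coef01 \<xi> 0) * wedge10_coef \<xi> \<Psi> 0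
    + (W $ 0 $ 0 * W $ 1 $ 2 * coef01 \<xi> 2 - W $ 0 $ 2 * W $ 1 $ 0 * coef01 \<xi> 2 + W $ 1 $ 0 * W $ 2 $ 2 * coef01 \<xi> 0 - W $ 1 $ 2 * W $ 2 $ 0 * coef01 \<xi> 0) * wedge10_coef \<xi> \<Psi> 1
    + (- W $ 0 $ 0 * W $ 2 $ 2 * coef01 \<xi> 2 + W $ 0 $ 2 * W $ 2 $ 0 * coef01 \<xi> 2) * wedge10_coef \<xi> \<Psi> 2
    + (W $ 0 $ 0 * W $ 2 $ 1 * coef10 \<xi> 2 - W $ 0 $ 0 * W $ 2 $ 2 * coef10 \<xi> 1 - W $ 0 $ 1 * W $ 2 $ 0 * coef10 \<xi> 2 + W $ 0 $ 1 * W $ 2 $ 2 * coef10 \<xi> 0 + W $ 0 $ 2 * W $ 2 $ 0 * coef10 \<xi> 1 - W $ 0 $ 2 * W $ 2 $ 1 * coef10 \<xi> 0) * wedge01_coef \<xi> \<Psi> 1"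
  unfolding defect_def sign11_def wedge10_coef_def wedge01_coef_def trace22_def lower22_def matrix_mult3_entry mat22_def adj3_def
  by (simp add: sum_3 third_def type_3_add_simps algebra_simps)

lemma defect_12: "defect W \<xi> \<Psi> 1 2 =
    (- W $ 0 $ 0 * W $ 1 $ 2 * coef01 \<xi> 0 + W $ 0 $ 2 * W $ 1 $ 0 * coef01 \<xi> 0) * wedge10_coef \<xi> \<Psi> 0
    + (W $ 0 $ 0 * W $ 1 $ 2 * coef01 \<xi> 1 - W $ 0 $ 2 * W $ 1 $ 0 * coef01 \<xi> 1) * wedge10_coef \<xi> \<Psi> 1
    + (- W $ 0 $ 0 * W $ 2 $ 2 * coef01 \<xi> 1 + W $ 0 $ 2 * W $ 2 $ 0 * coef01 \<xi> 1 + W $ 1 $ 0 * W $ 2 $ 2 * coef01 \<xi> 0 - W $ 1 $ 2 * W $ 2 $ 0 * coef01 \<xi> 0) * wedge10_coef \<xi> \<Psi> 2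
    + (W $ 0 $ 0 * W $ 1 $ 1 * coef10 \<xi> 2 - W $ 0 $ 0 * W $ 1 $ 2 * coef10 \<xi> 1 - W $ 0 $ 1 * W $ 1 $ 0 * coef10 \<xi> 2 + W $ 0 $ 1 * W $ 1 $ 2 * coef10 \<xi> 0 + W $ 0 $ 2 * W $ 1 $ 0 * coef10 \<xi> 1 - W $ 0 $ 2 * W $ 1 $ 1 * coef10 \<xi> 0) * wedge01_coef \<xi> \<Psi> 1"
  unfolding defect_def sign11_def wedge10_coef_def wedge01_coef_def trace22_def lower22_def matrix_mult3_entry mat22_def adj3_def
  by (simp add: sum_3 third_def type_3_add_simps algebra_simps)

lemma defect_20: "defect W \<xi> \<Psi> 2 0 =
    (W $ 0 $ 0 * W $ 1 $ 1 * coef01 \<xi> 2 - W $ 0 $ 0 * W $ 2 $ 1 * coef01 \<xi> 1 - W $ 0 $ 1 * W $ 1 $ 0 * coef01 \<xi> 2 + W $ 0 $ 1 * W $ 2 $ 0 * coef01 \<xi> 1 + W $ 1 $ 0 * W $ 2 $ 1 * coef01 \<xi> 0 - W $ 1 $ 1 * W $ 2 $ 0 * coef01 \<xi> 0) * wedge10_coef \<xi> \<Psi> 0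
    + (- W $ 1 $ 0 * W $ 2 $ 1 * coef10 \<xi> 0 + W $ 1 $ 1 * W $ 2 $ 0 * coef10 \<xi> 0) * wedge01_coef \<xi> \<Psi> 0
    + (W $ 1 $ 0 * W $ 2 $ 1 * coef10 \<xi> 1 - W $ 1 $ 1 * W $ 2 $ 0 * coef10 \<xi> 1) * wedge01_coef \<xi> \<Psi> 1
    + (- W $ 1 $ 0 * W $ 2 $ 2 * coef10 \<xi> 1 + W $ 1 $ 1 * W $ 2 $ 2 * coef10 \<xi> 0 + W $ 1 $ 2 * W $ 2 $ 0 * coef10 \<xi> 1 - W $ 1 $ 2 * W $ 2 $ 1 * coef10 \<xi> 0) * wedge01_coef \<xi> \<Psi> 2"
  unfolding defect_def sign11_def wedge10_coef_def wedge01_coef_def trace22_def lower22_def matrix_mult3_entry mat22_def adj3_def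
  by (simp add: sum_3 third_def type_3_add_simps algebra_simps)

lemma defect_21: "defect W \<xi> \<Psi> 2 1 =
    (W $ 0 $ 0 * W $ 1 $ 1 * coef01 \<xi> 2 - W $ 0 $ 0 * W $ 2 $ 1 * coef01 \<xi> 1 - W $ 0 $ 1 * W $ 1 $ 0 * coef01 \<xi> 2 + W $ 0 $ 1 * W $ 2 $ 0 * coef01 \<xi> 1 + W $ 1 $ 0 * W $ 2 $ 1 * coef01 \<xi> 0 - W $ 1 $ 1 * W $ 2 $ 0 * coef01 \<xi> 0) * wedge10_coef \<xi> \<Psi> 1
    + (- W $ 0 $ 0 * W $ 2 $ 1 * coef10 \<xi> 0 + W $ 0 $ 1 * W $ 2 $ 0 * coef10 \<xi> 0) * wedge01_coef \<xi> \<Psi> 0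
    + (W $ 0 $ 0 * W $ 2 $ 1 * coef10 \<xi> 1 - W $ 0 $ 1 * W $ 2 $ 0 * coef10 \<xi> 1) * wedge01_coef \<xi> \<Psi> 1
    + (- W $ 0 $ 0 * W $ 2 $ 2 * coef10 \<xi> 1 + W $ 0 $ 1 * W $ 2 $ 2 * coef10 \<xi> 0 + W $ 0 $ 2 * W $ 2 $ 0 * coef10 \<xi> 1 - W $ 0 $ 2 * W $ 2 $ 1 * coef10 \<xi> 0) * wedge01_coef \<xi> \<Psi> 2"
  unfolding defect_def sign11_def wedge10_coef_def wedge01_coef_def trace22_def lower22_def matrix_mult3_entry mat22_def adj3_def
  by (simp add: sum_3 third_def type_3_add_simps algebra_simps)

lemma defect_22: "defect W \<xi> \<Psi> 2 2 =
    (W $ 0 $ 0 * W $ 1 $ 1 * coef01 \<xi> 2 - W $ 0 $ 0 * W $ 2 $ 1 * coef01 \<xi> 1 - W $ 0 $ 1 * W $ 1 $ 0 * coef01 \<xi> 2 + W $ 0 $ 1 * W $ 2 $ 0 * coef01 \<xi> 1 + W $ 1 $ 0 * W $ 2 $ 1 * coef01 \<xi> 0 - W $ 1 $ 1 * W $ 2 $ 0 * coef01 \<xi> 0) * wedge10_coef \<xi> \<Psi> 2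
    + (- W $ 0 $ 0 * W $ 1 $ 1 * coef10 \<xi> 0 + W $ 0 $ 1 * W $ 1 $ 0 * coef10 \<xi> 0) * wedge01_coef \<xi> \<Psi> 0
    + (W $ 0 $ 0 * W $ 1 $ 1 * coef10 \<xi> 1 - W $ 0 $ 1 * W $ 1 $ 0 * coef10 \<xi> 1) * wedge01_coef \<xi> \<Psi> 1
    + (- W $ 0 $ 0 * W $ 1 $ 2 * coef10 \<xi> 1 + W $ 0 $ 1 * W $ 1 $ 2 * coef10 \<xi> 0 + W $ 0 $ 2 * W $ 1 $ 0 * coef10 \<xi> 1 - W $ 0 $ 2 * W $ 1 $ 1 * coef10 \<xi> 0) * wedge01_coef \<xi> \<Psi> 2"
  unfolding defect_def sign11_def wedge10_coef_def wedge01_coef_def trace22_def lower22_def matrix_mult3_entry mat22_def adj3_def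
  by (simp add: sum_3 third_def type_3_add_simps algebra_simps)

lemma defect_eq_0:
  assumes "\<And>b. wedge10_coef \<xi> \<Psi> b = 0" "\<And>a. wedge01_coef \<xi> \<Psi> a = 0"
  shows "defect W \<xi> \<Psi> a b = 0"
proof -
  have "a = 1 \<or> a = 2 \<or> a = 3" "b = 1 \<or> b = 2 \<or> b = 3" by (rule exhaust_3)+
  then show ?thesis
    by (elim disjE) (simp_all add: defect_00 defect_01 defect_02 defect_10 defect_11 defect_12 defect_20 defect_21 defect_22 assms)
qed

lemma wedge_conjf_tstar_idx22:
  assumes herm: "hermitian_metric W" and hx: "has_bidegree 1 0 \<xi>"
    and b22: "has_bidegree 2 2 \<Psi>" and rf: "real_form \<Psi>"
    and "wedge \<xi> \<Psi> = (\<lambda>_. 0)" "wedge (conjf \<xi>) \<Psi> = (\<lambda>_. 0)"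
  shows "\<i> * wedge (wedge \<xi> (conjf \<xi>)) (tstar W \<Omega> \<Psi>) (idx22 a b)
    = complex_of_real (covec_norm2 W \<xi>) / (2 * complex_of_real (Omega_norm W \<Omega>)) * \<Psi> (idx22 a b)"
proof -
  define k where "k = 1 / (2 * complex_of_real (Omega_norm W \<Omega>))"
  define T where "T = (\<Sum>c\<in>UNIV. \<Sum>e\<in>UNIV. if c \<noteq> a \<and> e \<noteq> b then sign11 a b c e * (coef10 \<xi> c * coef01 \<xi> e)
    * (trace22 W \<Psi> * W $ (third b e) $ (third a c) - lower22 W \<Psi> $ (third b e) $ (third a c)) else 0)"
  define s where "s = (\<Sum>c\<in>UNIV. \<Sum>e\<in>UNIV. matrix_inv W $ c $ e * coef10 \<xi> c * coef01 \<xi> e)"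
  have wedge_eq: "wedge (wedge \<xi> (conjf \<xi>)) (tstar W \<Omega> \<Psi>) (idx22 a b) = k * (\<i> / det W) * T"
    unfolding tstar_eq_form11[OF herm b22 rf] wedge_smult_right
    unfolding smult_def wedge_conjf_form11_idx22[OF hx]
      T_def k_def sum_distrib_left
    by (intro sum.cong refl) (auto simp: mult_ac)
  have "wedge10_coef \<xi> \<Psi> b' = 0" for b'
    using wedge_bideg10_compl_dzbar[OF hx, of \<Psi> b'] assms(5) by simp
  moreover have "wedge01_coef \<xi> \<Psi> a' = 0" for a'
    using wedge_conjf_bideg10_compl_dz[OF hx, of \<Psi> a'] assms(6) by simp
  ultimately have "defect W \<xi> \<Psi> a b = 0" by (rule defect_eq_0)
  then have "T + det W * s * coef22 \<Psi> a b = 0"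
    unfolding defect_def det_mult_covec_sum[OF herm, symmetric] T_def s_def .
  then have "T = - det W * s * coef22 \<Psi> a b" by (simp add: eq_neg_iff_add_eq_0)
  then show ?thesis
    unfolding wedge_eq covec_norm2_eq[OF herm] s_def[symmetric] coef22_def k_def
    using hermitian_metric_det_nonzero[OF herm] by (simp add: field_simps)
qed

theorem lemma2:
  fixes W :: "complex^3^3" and \<Omega> :: complex and \<xi> \<delta>\<Psi> :: cform
  assumes "hermitian_metric W"
    and "\<Omega> \<noteq> 0"
    and "has_bidegree 1 0 \<xi>"
    and "has_bidegree 2 2 \<delta>\<Psi>"
    and "real_form \<delta>\<Psi>"
    and "wedge \<xi> \<delta>\<Psi> = (\<lambda>_. 0)"
    and "wedge (conjf \<xi>) \<delta>\<Psi> = (\<lambda>_. 0)"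
  shows "smult \<i> (wedge (wedge \<xi> (conjf \<xi>)) (tstar W \<Omega> \<delta>\<Psi>))
       = smult (complex_of_real (covec_norm2 W \<xi>) / (2 * complex_of_real (Omega_norm W \<Omega>))) \<delta>\<Psi>"
proof (rule bideg22_eqI)
  have "has_bidegree 1 1 (tstar W \<Omega> \<delta>\<Psi>)"
    unfolding tstar_eq_form11[OF assms(1,4,5)] by (intro has_bidegree_smult has_bidegree_form11)
  then have "has_bidegree (1 + 1) (1 + 1) (wedge (wedge \<xi> (conjf \<xi>)) (tstar W \<Omega> \<delta>\<Psi>))"
    by (intro has_bidegree_wedge has_bidegree_wedge_conjf assms(3))
  then show "has_bidegree 2 2 (smult \<i> (wedge (wedge \<xi> (conjf \<xi>)) (tstar W \<Omega> \<delta>\<Psi>)))"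
    by (simp add: has_bidegree_smult numeral_2_eq_2)
  show "has_bidegree 2 2 (smult (complex_of_real (covec_norm2 W \<xi>) / (2 * complex_of_real (Omega_norm W \<Omega>))) \<delta>\<Psi>)"
    using assms(4) by (rule has_bidegree_smult)
  show "smult \<i> (wedge (wedge \<xi> (conjf \<xi>)) (tstar W \<Omega> \<delta>\<Psi>)) (idx22 a b)
      = smult (complex_of_real (covec_norm2 W \<xi>) / (2 * complex_of_real (Omega_norm W \<Omega>))) \<delta>\<Psi> (idx22 a b)" for a b
    unfolding smult_def using wedge_conjf_tstar_idx22[OF assms(1,3-7)] .
qed

end
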